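(* Let $\tau_0\geq 3$. Consider an oriented hyperbolic surface with boundary equipped with an ideal triangulation with zero shear, with dual graph $\mathcal{G}$, and run the process that at each step chooses uniformly at random a pair $\{h_1,h_2\}$ of distinct half-edges of the current dual graph with $\tau(h_1,h_2)\geq\tau_0$ and glues the corresponding boundary sides (with zero shear, orientation-reversing), producing dual graphs $\mathcal{G}^{(t)}$. If $\mathcal{G}^{(t)}$ is safe for some $t$, then $\mathcal{G}^{(t+1)}$ is also safe; hence from then on the process saturates (i.e. continues until no half-edges remain) with certainty.
   Context: The dual graph $\mathcal{G}$ of a zero-shear ideal triangulation has one trivalent vertex per triangle, an edge for each interior side and a half-edge for each boundary side; the orientation of the surface makes it a ribbon graph. A non-backtracking path in $\mathcal{G}$ carries a word in the letters $L,R$ recording whether it turns left or right at each vertex it traverses; replacing $L$ by $\begin{pmatrix}1&1\\0&1\end{pmatrix}$ and $R$ by $\begin{pmatrix}1&0\\1&1\end{pmatrix}$ gives a matrix whose trace is the trace of the path. For distinct half-edges $h_1,h_2$, the trace distance $\tau(h_1,h_2)$ is the minimum of the traces greater than $2$ of paths starting on $h_1$ and ending on $h_2$ (and $+\infty$ if there are none). $\mathcal{G}$ is called safe if (1) $\tau(h,h')\geq\tau_0$ for all pairs of distinct half-edges $h,h'$, and (2) every cusp on the boundary of the associated surface is incident to at least $\sqrt{\tau_0-2}$ triangles, i.e. whenever two half-edges are connected by a path carrying $L^k$ or $R^k$, then $k\geq\sqrt{\tau_0-2}$. *)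

theory Defs
  imports "HOL-Analysis.Analysis"
begin

text \<open>Ribbon graphs with half-edges, encoded by darts (flags).
  Each dart lies at a vertex; rot is the cyclic (orientation) order of the
  darts around their vertex; opp pairs the two darts of an interior edge,
  and a dart fixed by opp is a half-edge (a boundary side).\<close>

record 'd rgraph =
  darts :: "'d set"
  rot :: "'d \<Rightarrow> 'd"
  opp :: "'d \<Rightarrow> 'd"

definition trivalent_ribbon_graph :: "'d rgraph \<Rightarrow> bool" where
  "trivalent_ribbon_graph G \<longleftrightarrow>
     finite (darts G) \<and>
     bij_betw (rot G) (darts G) (darts G) \<and>
     (\<forall>d\<in>darts G. rot G d \<noteq> d \<and> rot G (rot G (rot G d)) = d) \<and>
     (\<forall>d\<in>darts G. opp G d \<in> darts G \<and> opp G (opp G d) = d)"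

definition half_edges :: "'d rgraph \<Rightarrow> 'd set" where
  "half_edges G = {d \<in> darts G. opp G d = d}"

definition glue :: "'d rgraph \<Rightarrow> 'd \<Rightarrow> 'd \<Rightarrow> 'd rgraph" where
  "glue G h1 h2 = G\<lparr>opp := (opp G)(h1 := h2, h2 := h1)\<rparr>"

text \<open>Turn letters: True = L, False = R.  Entering a vertex through dart e,
  a left turn leaves through rot e, a right turn through rot (rot e) (= rot^-1 e).
  (Swapping the convention does not change any trace.)\<close>
definition exit_dart :: "'d rgraph \<Rightarrow> bool \<Rightarrow> 'd \<Rightarrow> 'd" where
  "exit_dart G b e = (if b then rot G e else rot G (rot G e))"

text \<open>walk G e w f: the non-backtracking path entering its first vertex through
  dart e, turning according to the word w at each traversed vertex,
  and leaving its last vertex through dart f.\<close>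
fun walk :: "'d rgraph \<Rightarrow> 'd \<Rightarrow> bool list \<Rightarrow> 'd \<Rightarrow> bool" where
  "walk G e [] f = False"
| "walk G e [b] f = (exit_dart G b e = f)"
| "walk G e (b # c # w) f =
     (let x = exit_dart G b e in opp G x \<noteq> x \<and> walk G (opp G x) (c # w) f)"

definition path_words :: "'d rgraph \<Rightarrow> 'd \<Rightarrow> 'd \<Rightarrow> bool list set" where
  "path_words G h1 h2 = {w. h1 \<in> half_edges G \<and> h2 \<in> half_edges G \<and> walk G h1 w h2}"

definition Lmat :: "int^2^2" where
  "Lmat = (\<chi> i j. if i = 2 \<and> j = 1 then 0 else 1)"

definition Rmat :: "int^2^2" where
  "Rmat = (\<chi> i j. if i = 1 \<and> j = 2 then 0 else 1)"

definition word_mat :: "bool list \<Rightarrow> int^2^2" where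
  "word_mat w = foldr (\<lambda>b M. (if b then Lmat else Rmat) ** M) w (mat 1)"

definition word_trace :: "bool list \<Rightarrow> int" where
  "word_trace w = trace (word_mat w)"

definition trace_dist :: "'d rgraph \<Rightarrow> 'd \<Rightarrow> 'd \<Rightarrow> ereal" where
  "trace_dist G h1 h2 =
     Inf ((\<lambda>w. ereal (real_of_int (word_trace w))) `
          {w \<in> path_words G h1 h2. word_trace w > 2})"

definition safe :: "real \<Rightarrow> 'd rgraph \<Rightarrow> bool" where
  "safe \<tau>0 G \<longleftrightarrow>
     (\<forall>h\<in>half_edges G. \<forall>h'\<in>half_edges G. h \<noteq> h' \<longrightarrow> ereal \<tau>0 \<le> trace_dist G h h') \<and>
     (\<forall>h\<in>half_edges G. \<forall>h'\<in>half_edges G. \<forall>k b. h \<noteq> h' \<and> replicate k b \<in> path_words G h h'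
          \<longrightarrow> real k \<ge> sqrt (\<tau>0 - 2))"

end

theory Submission
  imports Defs "HOL-Library.Sublist"
begin

(* The matrices of words in L and R have nonnegative entries and grow entrywise when letters are
   inserted, so the trace is monotone under taking subwords; a pure word has trace 2, a mixed word
   trace at least 3, and L^k R^j has trace 2 + kj.
   A path of the glued graph between two of its half-edges either avoids the new edge, and is then
   a path of the old graph, or its first crossing cuts off an initial segment of the old graph
   ending on h1 or h2.  A mixed segment between half-edges of the old graph has trace at least
   tau0 by safety, and so has every path containing it as a subword.  Otherwise the initial segment
   is a block L^k with k >= sqrt (tau0 - 2), and following the path further produces as a subword
   either a second long block R^j (trace 2 + kj >= tau0), or a mixed path of the old graph between
   half-edges (obtained by cutting out a backtracking through the glued edge), or two pure paths
   L^k ending on the same half-edge from different half-edges, which cannot exist because a pure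
   path can be followed backwards uniquely until it meets a half-edge. *)

(* The entries (M11, M12, M21, M22) of word_mat w, as a tuple so that the componentwise order
   of Product_Order applies. *)
fun word_entries :: "bool list \<Rightarrow> int \<times> int \<times> int \<times> int" where
  "word_entries [] = (1, 0, 0, 1)"
| "word_entries (x # w) =
     (case word_entries w of (p, q, r, s) \<Rightarrow>
        if x then (p + r, q + s, r, s) else (p, q, p + r, q + s))"

lemma word_mat_Cons: "word_mat (x # w) = (if x then Lmat else Rmat) ** word_mat w"
  by (simp add: word_mat_def)

lemma word_entries_eq:
  "word_entries w = (word_mat w $ 1 $ 1, word_mat w $ 1 $ 2, word_mat w $ 2 $ 1, word_mat w $ 2 $ 2)"
proof (induction w)
  case Nil
  then show ?case by (simp add: word_mat_def mat_def)
next
  case (Cons x w)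
  then show ?case by (simp add: word_mat_Cons matrix_matrix_mult_def sum_2 Lmat_def Rmat_def)
qed

lemma word_trace_eq: "word_trace w = fst (word_entries w) + snd (snd (snd (word_entries w)))"
  by (simp add: word_entries_eq word_trace_def trace_def sum_2)

lemma word_entries_ge: "(1, 0, 0, 1) \<le> word_entries w"
  by (induction w) (auto split: prod.splits)

lemma word_entries_le_Cons: "word_entries w \<le> word_entries (x # w)"
  using word_entries_ge[of w] by (auto split: prod.splits)

lemma word_entries_Cons_mono:
  "word_entries u \<le> word_entries w \<Longrightarrow> word_entries (x # u) \<le> word_entries (x # w)"
  by (auto split: prod.splits)

lemma word_entries_subseq_mono: "subseq u w \<Longrightarrow> word_entries u \<le> word_entries w"
proof (induction rule: list_emb.induct)
  case (list_emb_Nil w)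
  then show ?case using word_entries_ge[of w] by simp
next
  case (list_emb_Cons u w x)
  then show ?case using word_entries_le_Cons order_trans by blast
next
  case (list_emb_Cons2 x y u w)
  then show ?case using word_entries_Cons_mono[of u w x] by (simp del: word_entries.simps)
qed

lemma word_trace_subseq_mono: "subseq u w \<Longrightarrow> word_trace u \<le> word_trace w"
  using word_entries_subseq_mono[of u w] by (simp add: word_trace_eq less_eq_prod_def add_mono)

lemma word_entries_replicate_append:
  "word_entries (replicate k b @ w) =
     (case word_entries w of (p, q, r, s) \<Rightarrow>
        if b then (p + int k * r, q + int k * s, r, s) else (p, q, r + int k * p, s + int k * q))"
  by (induction k) (auto split: prod.splits simp: algebra_simps)

lemma word_trace_two_blocks: "word_trace (replicate k b @ replicate j (\<not> b)) = 2 + int k * int j"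
  using word_entries_replicate_append[of k b "replicate j (\<not> b)"]
    word_entries_replicate_append[of j "\<not> b" "[]"]
  by (cases b) (simp_all add: word_trace_eq)

lemma word_trace_replicate: "word_trace (replicate k b) = 2"
  using word_trace_two_blocks[of k b 0] by simp

lemma word_trace_ge_if_two_long_blocks:
  fixes \<tau>0 :: real
  assumes "sqrt (\<tau>0 - 2) \<le> real k" "sqrt (\<tau>0 - 2) \<le> real j"
    and "subseq (replicate k b @ replicate j (\<not> b)) w"
  shows "\<tau>0 \<le> word_trace w"
proof -
  have "\<tau>0 - 2 \<le> real k * real j"
  proof (cases "2 \<le> \<tau>0")
    case True
    then have "\<tau>0 - 2 = sqrt (\<tau>0 - 2) * sqrt (\<tau>0 - 2)" by simp
    also have "\<dots> \<le> real k * real j" using assms(1,2) True by (intro mult_mono) auto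
    finally show ?thesis .
  next
    case False
    have "0 \<le> real k * real j" by simp
    then show ?thesis using False by linarith
  qed
  then have "\<tau>0 \<le> word_trace (replicate k b @ replicate j (\<not> b))"
    by (simp add: word_trace_two_blocks)
  also have "\<dots> \<le> word_trace w" using word_trace_subseq_mono[OF assms(3)] by simp
  finally show ?thesis .
qed

definition mixed :: "bool list \<Rightarrow> bool" where
  "mixed w \<longleftrightarrow> True \<in> set w \<and> False \<in> set w"

lemma replicate_if_negation_not_mem: "(\<not> b) \<notin> set w \<Longrightarrow> w = replicate (length w) b"
proof -
  assume "(\<not> b) \<notin> set w"
  then have "x = b" if "x \<in> set w" for x using that by (cases x; cases b) auto
  then show ?thesis by (simp add: replicate_length_same)
qed

lemma replicate_if_not_mixed: "\<not> mixed w \<Longrightarrow> b \<in> set w \<Longrightarrow> w = replicate (length w) b"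
  by (rule replicate_if_negation_not_mem) (cases b; auto simp: mixed_def)

lemma word_trace_ge_3_if_mixed:
  assumes "mixed w"
  shows "3 \<le> word_trace w"
proof -
  obtain x w' where w: "w = x # w'" using assms by (cases w) (auto simp: mixed_def)
  then have "(\<not> x) \<in> set w'" using assms by (cases x) (auto simp: mixed_def)
  then have "subseq (replicate 1 x @ replicate 1 (\<not> x)) w"
    using w by (simp add: subseq_singleton_left)
  then show ?thesis using word_trace_subseq_mono word_trace_two_blocks[of 1 x 1] by fastforce
qed

lemma mixed_iff_word_trace_gt_2: "mixed w \<longleftrightarrow> 2 < word_trace w"
proof
  assume "2 < word_trace w"
  moreover have "(\<not> b) \<notin> set w \<Longrightarrow> word_trace w = 2" for b
    by (subst replicate_if_negation_not_mem) (simp_all add: word_trace_replicate)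
  ultimately show "mixed w" unfolding mixed_def by (metis (full_types) less_irrefl)
qed (use word_trace_ge_3_if_mixed in fastforce)

lemma walk_append:
  "u \<noteq> [] \<Longrightarrow> v \<noteq> [] \<Longrightarrow>
   walk G e (u @ v) f \<longleftrightarrow> (\<exists>x. walk G e u x \<and> opp G x \<noteq> x \<and> walk G (opp G x) v f)"
proof (induction u arbitrary: e)
  case (Cons b u)
  then show ?case by (cases u; cases v) (auto simp: Let_def)
qed simp

(* The path from e along w can be continued into its next vertex, entering it through d; for
   w = [] this is the start dart e itself. *)
definition enters :: "'d rgraph \<Rightarrow> 'd \<Rightarrow> bool list \<Rightarrow> 'd \<Rightarrow> bool" where
  "enters G e w d \<longleftrightarrow> (w = [] \<and> d = e) \<or> (\<exists>x. walk G e w x \<and> opp G x \<noteq> x \<and> d = opp G x)"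

lemma walk_append_iff_enters:
  "v \<noteq> [] \<Longrightarrow> walk G e (u @ v) f \<longleftrightarrow> (\<exists>d. enters G e u d \<and> walk G d v f)"
  by (cases "u = []") (auto simp: enters_def walk_append)

lemma walk_snoc_iff_enters:
  "walk G e (u @ [b]) f \<longleftrightarrow> (\<exists>d. enters G e u d \<and> exit_dart G b d = f)"
  by (simp add: walk_append_iff_enters)

lemma walk_Cons_exit_eq:
  "walk G z (b # w) f \<Longrightarrow> exit_dart G b z = exit_dart G c d \<Longrightarrow> walk G d (c # w) f"
  by (cases w) (auto simp: Let_def)

context
  fixes G :: "'d rgraph"
  assumes trivalent: "trivalent_ribbon_graph G"
begin

lemma rot_in_darts: "d \<in> darts G \<Longrightarrow> rot G d \<in> darts G"
  using trivalent unfolding trivalent_ribbon_graph_def bij_betw_def by auto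

lemma inj_on_rot: "inj_on (rot G) (darts G)"
  using trivalent unfolding trivalent_ribbon_graph_def bij_betw_def by auto

lemma rot_rot_rot: "d \<in> darts G \<Longrightarrow> rot G (rot G (rot G d)) = d"
  using trivalent unfolding trivalent_ribbon_graph_def by auto

lemma opp_in_darts: "d \<in> darts G \<Longrightarrow> opp G d \<in> darts G"
  using trivalent unfolding trivalent_ribbon_graph_def by auto

lemma opp_opp: "d \<in> darts G \<Longrightarrow> opp G (opp G d) = d"
  using trivalent unfolding trivalent_ribbon_graph_def by auto

lemma exit_dart_in_darts: "d \<in> darts G \<Longrightarrow> exit_dart G b d \<in> darts G"
  by (simp add: exit_dart_def rot_in_darts)

lemma exit_dart_inj:
  "d \<in> darts G \<Longrightarrow> d' \<in> darts G \<Longrightarrow> exit_dart G b d = exit_dart G b d' \<Longrightarrow> d = d'"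
  using inj_on_rot rot_in_darts unfolding exit_dart_def inj_on_def by (cases b) auto

(* rot has order 3 at a vertex: two equal turns make the opposite turn, two opposite turns lead
   back out through the entry dart. *)
lemma exit_dart_turn:
  assumes "d \<in> darts G" "exit_dart G b (exit_dart G a d) \<noteq> d"
  shows "b = a \<and> exit_dart G b (exit_dart G a d) = exit_dart G (\<not> a) d"
  using assms rot_rot_rot[of d] unfolding exit_dart_def by (cases a; cases b) auto

lemma walk_end_in_darts: "walk G e w f \<Longrightarrow> e \<in> darts G \<Longrightarrow> f \<in> darts G"
proof (induction w arbitrary: e)
  case (Cons b w)
  then show ?case by (cases w) (auto simp: Let_def exit_dart_in_darts opp_in_darts)
qed simp

lemma enters_in_darts: "enters G e w d \<Longrightarrow> e \<in> darts G \<Longrightarrow> d \<in> darts G"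
  unfolding enters_def using walk_end_in_darts opp_in_darts by blast

lemma enters_half_edge:
  assumes "enters G e w d" "e \<in> darts G" "opp G d = d"
  shows "w = [] \<and> d = e"
proof (rule ccontr)
  assume "\<not> (w = [] \<and> d = e)"
  then obtain x where "walk G e w x" "opp G x \<noteq> x" "d = opp G x"
    using assms(1) unfolding enters_def by blast
  then show False using assms(2,3) walk_end_in_darts opp_opp by metis
qed

lemma enters_replicate_same_start:
  assumes "a \<in> half_edges G" "a' \<in> half_edges G"
  shows "enters G a (replicate k b) d \<Longrightarrow> enters G a' (replicate j b) d \<Longrightarrow> a = a'"
proof (induction k arbitrary: j d)
  case 0
  then show ?case
    using enters_half_edge[of a' "replicate j b" d] assms by (auto simp: enters_def half_edges_def)
next
  case (Suc k)
  have "j \<noteq> 0"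
  proof
    assume "j = 0"
    then have "opp G d = d" using Suc.prems(2) assms(2) by (simp add: enters_def half_edges_def)
    then show False using enters_half_edge[OF Suc.prems(1)] assms(1) by (simp add: half_edges_def)
  qed
  then obtain j' where j: "j = Suc j'" using not0_implies_Suc by blast
  obtain x where x: "walk G a (replicate k b @ [b]) x" "opp G x \<noteq> x" "d = opp G x"
    using Suc.prems(1) by (auto simp: enters_def replicate_append_same)
  obtain y where y: "walk G a' (replicate j' b @ [b]) y" "opp G y \<noteq> y" "d = opp G y"
    using Suc.prems(2) j by (auto simp: enters_def replicate_append_same)
  have darts: "a \<in> darts G" "a' \<in> darts G" using assms by (simp_all add: half_edges_def)
  then have "x = y" using x y walk_end_in_darts opp_opp by metis
  obtain e where e: "enters G a (replicate k b) e" "exit_dart G b e = x"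
    using x(1) walk_snoc_iff_enters by metis
  obtain e' where e': "enters G a' (replicate j' b) e'" "exit_dart G b e' = y"
    using y(1) walk_snoc_iff_enters by metis
  have "e = e'"
    using e e' \<open>x = y\<close> exit_dart_inj enters_in_darts darts by metis
  then show ?case using Suc.IH e(1) e'(1) by blast
qed

lemma replicate_walks_same_end:
  assumes "a \<in> half_edges G" "a' \<in> half_edges G"
    and "walk G a (replicate k b) z" "walk G a' (replicate j b) z"
  shows "a = a'"
proof -
  obtain k' j' where kj: "k = Suc k'" "j = Suc j'"
    using assms(3,4) by (cases k; cases j) auto
  have "walk G a (replicate k' b @ [b]) z" "walk G a' (replicate j' b @ [b]) z"
    using assms(3,4) kj by (simp_all add: replicate_append_same)
  then obtain d d' where d: "enters G a (replicate k' b) d" "exit_dart G b d = z"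
    and d': "enters G a' (replicate j' b) d'" "exit_dart G b d' = z"
    using walk_snoc_iff_enters by metis
  have "a \<in> darts G" "a' \<in> darts G" using assms(1,2) by (simp_all add: half_edges_def)
  then have "d \<in> darts G" "d' \<in> darts G" using d(1) d'(1) enters_in_darts by blast+
  then have "d = d'" using d(2) d'(2) exit_dart_inj by metis
  then show ?thesis using enters_replicate_same_start[OF assms(1,2)] d(1) d'(1) by blast
qed

(* A walk that leaves through z and immediately re-enters through z backtracks; cutting out the
   backtracking leaves a walk that turns the other way at the last vertex the two pieces share. *)
lemma walk_backtrack_shortcut:
  assumes "e \<in> half_edges G" "f \<in> half_edges G" "e \<noteq> f"
  shows "walk G e A z \<Longrightarrow> walk G z B f \<Longrightarrow>
    \<exists>A1 \<alpha> A2 B1 B2. A = A1 @ [\<alpha>] @ A2 \<and> B = B1 @ [\<alpha>] @ B2 \<and> walk G e (A1 @ [\<not> \<alpha>] @ B2) f"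
proof (induction A arbitrary: z B rule: rev_induct)
  case (snoc a A)
  have e: "e \<in> darts G" "opp G e = e" and f: "opp G f = f"
    using assms by (simp_all add: half_edges_def)
  obtain d where d: "enters G e A d" "exit_dart G a d = z"
    using snoc.prems(1) walk_snoc_iff_enters by metis
  have d_darts: "d \<in> darts G" using enters_in_darts d(1) e(1) by blast
  obtain b B' where B: "B = b # B'" using snoc.prems(2) by (cases B) auto
  show ?case
  proof (cases "exit_dart G b z = d")
    case False
    then have "b = a" and turn: "exit_dart G b z = exit_dart G (\<not> a) d"
      using exit_dart_turn d_darts d(2) by auto
    have "walk G z (b # B') f" using snoc.prems(2) B by simp
    then have "walk G d ((\<not> a) # B') f" using walk_Cons_exit_eq turn by metis
    then have "walk G e (A @ [\<not> a] @ B') f" using d(1) walk_append_iff_enters by fastforce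
    then show ?thesis using B \<open>b = a\<close>
      by (intro exI[of _ A] exI[of _ a] exI[of _ "[]"] exI[of _ "[]"] exI[of _ B']) auto
  next
    case True
    have "B' \<noteq> []"
    proof
      assume "B' = []"
      then have "d = f" using snoc.prems(2) B True by simp
      then show False using enters_half_edge[OF d(1) e(1)] f assms(3) by simp
    qed
    then have reenter: "opp G d \<noteq> d" "walk G (opp G d) B' f"
      using snoc.prems(2) B True by (cases B'; simp add: Let_def)+
    then obtain x where x: "walk G e A x" "d = opp G x"
      using d(1) e(2) unfolding enters_def by auto
    then have "walk G x B' f" using reenter(2) walk_end_in_darts opp_opp e(1) by metis
    then obtain A1 \<alpha> A2 B1 B2 where "A = A1 @ [\<alpha>] @ A2" "B' = B1 @ [\<alpha>] @ B2"
        "walk G e (A1 @ [\<not> \<alpha>] @ B2) f"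
      using snoc.IH x(1) by blast
    then show ?thesis using B
      by (intro exI[of _ A1] exI[of _ \<alpha>] exI[of _ "A2 @ [a]"] exI[of _ "b # B1"] exI[of _ B2]) auto
  qed
qed simp

end

lemma darts_glue [simp]: "darts (glue G h1 h2) = darts G"
  by (simp add: glue_def)

lemma rot_glue [simp]: "rot (glue G h1 h2) = rot G"
  by (simp add: glue_def)

lemma opp_glue: "opp (glue G h1 h2) = (opp G)(h1 := h2, h2 := h1)"
  by (simp add: glue_def)

lemma exit_dart_glue [simp]: "exit_dart (glue G h1 h2) = exit_dart G"
  by (simp add: exit_dart_def fun_eq_iff)

lemma half_edges_glue: "h1 \<noteq> h2 \<Longrightarrow> half_edges (glue G h1 h2) = half_edges G - {h1, h2}"
  by (auto simp: half_edges_def opp_glue)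

lemma opp_glue_swap:
  "h1 \<noteq> h2 \<Longrightarrow> x \<in> {h1, h2} \<Longrightarrow>
   opp (glue G h1 h2) x \<in> {h1, h2} - {x} \<and> opp (glue G h1 h2) (opp (glue G h1 h2) x) = x"
  by (auto simp: opp_glue)

lemma walk_glue_first_crossing:
  "walk (glue G h1 h2) e W f \<Longrightarrow> walk G e W f \<or>
    (\<exists>u v x. W = u @ v \<and> walk G e u x \<and> x \<in> {h1, h2} \<and>
       walk (glue G h1 h2) (opp (glue G h1 h2) x) v f)"
proof (induction W arbitrary: e)
  case (Cons a W)
  show ?case
  proof (cases W)
    case (Cons c W')
    define y where "y = exit_dart G a e"
    have w: "opp (glue G h1 h2) y \<noteq> y" "walk (glue G h1 h2) (opp (glue G h1 h2) y) W f"
      using Cons.prems \<open>W = c # W'\<close> by (simp_all add: Let_def y_def)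
    show ?thesis
    proof (cases "y \<in> {h1, h2}")
      case True
      then show ?thesis using w
        by (intro disjI2 exI[of _ "[a]"] exI[of _ W] exI[of _ y]) (auto simp: y_def)
    next
      case False
      then have oy: "opp (glue G h1 h2) y = opp G y" by (simp add: opp_glue)
      from Cons.IH[of "opp G y"] w oy
      consider "walk G (opp G y) W f"
        | u v x where "W = u @ v" "walk G (opp G y) u x" "x \<in> {h1, h2}"
            "walk (glue G h1 h2) (opp (glue G h1 h2) x) v f"
        by auto
      then show ?thesis
      proof cases
        case 1
        then show ?thesis using w oy \<open>W = c # W'\<close> by (simp add: Let_def y_def)
      next
        case 2
        obtain u1 u' where "u = u1 # u'" using 2(2) by (cases u) auto
        then have "walk G e (a # u) x" using 2(2) w(1) oy by (simp add: Let_def y_def)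
        then show ?thesis using 2 by (intro disjI2 exI[of _ "a # u"] exI[of _ v] exI[of _ x]) auto
      qed
    qed
  qed (use Cons.prems in simp)
qed simp

lemma walk_glue_last_crossing:
  "walk (glue G h1 h2) e W f \<Longrightarrow> walk G e W f \<or>
    (\<exists>u v x. W = u @ v \<and> walk (glue G h1 h2) e u x \<and> x \<in> {h1, h2} \<and>
       walk G (opp (glue G h1 h2) x) v f)"
proof (induction W arbitrary: e)
  case (Cons a W)
  show ?case
  proof (cases W)
    case (Cons c W')
    define y where "y = exit_dart G a e"
    have w: "opp (glue G h1 h2) y \<noteq> y" "walk (glue G h1 h2) (opp (glue G h1 h2) y) W f"
      using Cons.prems \<open>W = c # W'\<close> by (simp_all add: Let_def y_def)
    from Cons.IH[OF w(2)]
    consider "walk G (opp (glue G h1 h2) y) W f"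
      | u v x where "W = u @ v" "walk (glue G h1 h2) (opp (glue G h1 h2) y) u x" "x \<in> {h1, h2}"
          "walk G (opp (glue G h1 h2) x) v f"
      by blast
    then show ?thesis
    proof cases
      case 1
      show ?thesis
      proof (cases "y \<in> {h1, h2}")
        case True
        then show ?thesis using 1
          by (intro disjI2 exI[of _ "[a]"] exI[of _ W] exI[of _ y]) (auto simp: y_def)
      next
        case False
        then show ?thesis using 1 w \<open>W = c # W'\<close> by (simp add: Let_def y_def opp_glue)
      qed
    next
      case 2
      obtain u1 u' where "u = u1 # u'" using 2(2) by (cases u) auto
      then have "walk (glue G h1 h2) e (a # u) x" using 2(2) w(1) by (simp add: Let_def y_def)
      then show ?thesis using 2 by (intro disjI2 exI[of _ "a # u"] exI[of _ v] exI[of _ x]) auto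
    qed
  qed (use Cons.prems in simp)
qed simp

context
  fixes \<tau>0 :: real and G :: "'d rgraph"
  assumes safe: "safe \<tau>0 G"
begin

lemma safe_trace_dist:
  "h \<in> half_edges G \<Longrightarrow> h' \<in> half_edges G \<Longrightarrow> h \<noteq> h' \<Longrightarrow> ereal \<tau>0 \<le> trace_dist G h h'"
  using safe unfolding safe_def by blast

lemma safe_replicate_walk_length:
  "a \<in> half_edges G \<Longrightarrow> b \<in> half_edges G \<Longrightarrow> a \<noteq> b \<Longrightarrow> walk G a (replicate k c) b \<Longrightarrow>
   sqrt (\<tau>0 - 2) \<le> real k"
  using safe unfolding safe_def path_words_def by blast

lemma safe_mixed_walk_bound:
  assumes "a \<in> half_edges G" "b \<in> half_edges G" "a \<noteq> b" "walk G a u b" "mixed u"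
    and "subseq u w"
  shows "\<tau>0 \<le> word_trace w"
proof -
  have "u \<in> {u \<in> path_words G a b. 2 < word_trace u}"
    using assms(1,2,4,5) by (simp add: path_words_def mixed_iff_word_trace_gt_2)
  then have "trace_dist G a b \<le> ereal (word_trace u)"
    unfolding trace_dist_def by (rule INF_lower)
  then have "ereal \<tau>0 \<le> ereal (word_trace u)"
    using safe_trace_dist[OF assms(1-3)] by (rule order_trans[rotated])
  then have "\<tau>0 \<le> word_trace u" by simp
  also have "\<dots> \<le> word_trace w" using word_trace_subseq_mono[OF assms(6)] by simp
  finally show ?thesis .
qed

lemma safe_block_then_walk_bound:
  assumes "sqrt (\<tau>0 - 2) \<le> real k"
    and "y \<in> half_edges G" "z \<in> half_edges G" "y \<noteq> z" "walk G y u z" "(\<not> b) \<in> set u"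
    and "subseq (replicate k b @ u) w"
  shows "\<tau>0 \<le> word_trace w"
proof (cases "mixed u")
  case True
  have "subseq u w" using assms(7) list_emb_append2 subseq_order.order_trans by blast
  then show ?thesis using safe_mixed_walk_bound[OF assms(2-5) True] by blast
next
  case False
  then obtain n where u: "u = replicate n (\<not> b)" using replicate_if_not_mixed assms(6) by blast
  then have "sqrt (\<tau>0 - 2) \<le> real n" using safe_replicate_walk_length assms(2-5) by blast
  then show ?thesis using word_trace_ge_if_two_long_blocks assms(1,7) u by blast
qed

end

context
  fixes \<tau>0 :: real and G :: "'d rgraph"
  assumes trivalent: "trivalent_ribbon_graph G" and safe: "safe \<tau>0 G"
begin

lemma safe_pure_walks_same_end_bound:
  assumes "sqrt (\<tau>0 - 2) \<le> real k"
    and "h \<in> half_edges G" "y \<in> half_edges G" "x \<in> half_edges G" "h \<noteq> y" "y \<noteq> x"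
    and "walk G h (replicate k b) x" "walk G y u x" "subseq (replicate k b @ u) w"
  shows "\<tau>0 \<le> word_trace w"
proof (cases "(\<not> b) \<in> set u")
  case True
  show ?thesis using safe_block_then_walk_bound[OF safe assms(1,3,4,6,8) True assms(9)] .
next
  case False
  then have "walk G y (replicate (length u) b) x"
    using assms(8) replicate_if_negation_not_mem by metis
  then have "h = y" using replicate_walks_same_end[OF trivalent assms(2,3,7)] by blast
  then show ?thesis using assms(5) by contradiction
qed

lemma safe_backtrack_bound:
  assumes "h \<in> half_edges G" "h' \<in> half_edges G" "h \<noteq> h'"
    and "walk G h (replicate k b) x" "walk G x (replicate m b) h'" "(\<not> b) \<in> set M"
  shows "\<tau>0 \<le> word_trace (replicate k b @ M @ replicate m b)" (is "_ \<le> _ (word_trace ?w)")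
proof -
  obtain A1 \<alpha> A2 B1 B2 where A: "replicate k b = A1 @ [\<alpha>] @ A2"
    and B: "replicate m b = B1 @ [\<alpha>] @ B2" and C: "walk G h (A1 @ [\<not> \<alpha>] @ B2) h'"
    using walk_backtrack_shortcut[OF trivalent assms(1-5)] by blast
  have "set (A1 @ [\<alpha>] @ A2) \<subseteq> {b}" "set (B1 @ [\<alpha>] @ B2) \<subseteq> {b}"
    unfolding A[symmetric] B[symmetric] by auto
  then have \<alpha>: "\<alpha> = b" and A1: "set A1 \<subseteq> {b}" and B2: "set B2 \<subseteq> {b}" by auto
  have sub: "subseq (A1 @ [\<not> b] @ B2) ?w"
    unfolding A B \<alpha> using assms(6)
    by (intro list_emb_append_mono) (auto simp: subseq_singleton_left)
  show ?thesis
  proof (cases "mixed (A1 @ [\<not> b] @ B2)")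
    case True
    then show ?thesis using safe_mixed_walk_bound[OF safe assms(1-3) _ True sub] C \<alpha> by simp
  next
    case False
    then have "A1 @ [\<not> b] @ B2 = replicate (length (A1 @ [\<not> b] @ B2)) (\<not> b)"
      by (intro replicate_if_not_mixed) auto
    then have "A1 = [] \<and> B2 = []" using A1 B2 by (cases A1; cases B2) auto
    then have "walk G h (replicate 1 (\<not> b)) h'" using C \<alpha> by simp
    then have "\<tau>0 \<le> 3" using safe_replicate_walk_length[OF safe assms(1-3)] by fastforce
    moreover have "k \<noteq> 0" using assms(4) by (cases k) auto
    then have "mixed ?w" using assms(6) by (cases b) (auto simp: mixed_def)
    ultimately show ?thesis using word_trace_ge_3_if_mixed by fastforce
  qed
qed

end

context
  fixes \<tau>0 :: real and G :: "'d rgraph" and h1 h2 :: 'd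
  assumes trivalent: "trivalent_ribbon_graph G" and safe: "safe \<tau>0 G"
    and h1: "h1 \<in> half_edges G" and h2: "h2 \<in> half_edges G" and h1_neq_h2: "h1 \<noteq> h2"
begin

lemma glued_loop_turns:
  assumes "h \<in> half_edges G" "h \<notin> {h1, h2}" "x \<in> {h1, h2}" "z \<in> {h1, h2}"
    and "walk G h (replicate k b) x" "walk (glue G h1 h2) z M x"
  shows "(\<not> b) \<in> set M"
proof -
  obtain z' v where z': "z' \<in> {h1, h2}" and "suffix v M" and v: "walk G z' v x"
  proof -
    from walk_glue_last_crossing[OF assms(6)]
    consider "walk G z M x"
      | u v y where "M = u @ v" "y \<in> {h1, h2}" "walk G (opp (glue G h1 h2) y) v x"
      by blast
    then show ?thesis
    proof cases
      case 1
      then show ?thesis using that assms(4) by blast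
    next
      case 2
      then show ?thesis using that[of "opp (glue G h1 h2) y" v] opp_glue_swap[OF h1_neq_h2]
        by (auto simp: suffix_def)
    qed
  qed
  have "(\<not> b) \<in> set v"
  proof (rule ccontr)
    assume "(\<not> b) \<notin> set v"
    then have "walk G z' (replicate (length v) b) x"
      using v replicate_if_negation_not_mem by metis
    then have "h = z'" using replicate_walks_same_end[OF trivalent assms(1) _ assms(5)] z' h1 h2 by blast
    then show False using assms(2) z' by simp
  qed
  then show ?thesis using \<open>suffix v M\<close> by (auto simp: suffix_def)
qed

lemma glued_loop_bound:
  assumes "h \<in> half_edges G" "h \<notin> {h1, h2}" "h' \<in> half_edges G" "h' \<notin> {h1, h2}"
    and "sqrt (\<tau>0 - 2) \<le> real k" "x \<in> {h1, h2}"
    and "walk G h (replicate k b) x" "walk (glue G h1 h2) (opp (glue G h1 h2) x) M x"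
    and "walk G (opp (glue G h1 h2) x) (replicate m b) h'"
  shows "\<tau>0 \<le> word_trace (replicate k b @ M @ replicate m b)" (is "_ \<le> _ (word_trace ?w)")
proof -
  define y where "y = opp (glue G h1 h2) x"
  have y: "y \<in> {h1, h2}" "y \<noteq> x" "opp (glue G h1 h2) y = x"
    using opp_glue_swap[OF h1_neq_h2 assms(6)] by (auto simp: y_def)
  have yG: "y \<in> half_edges G" and xG: "x \<in> half_edges G" using y(1) assms(6) h1 h2 by auto
  have hy: "h \<noteq> y" and yh': "y \<noteq> h'" using assms(2,4) y(1) by auto
  have prefix_bound: "\<tau>0 \<le> word_trace ?w" if "walk G y u x" "prefix u M" for u
  proof (rule safe_pure_walks_same_end_bound
      [OF trivalent safe assms(5,1) yG xG hy y(2) assms(7) that(1)])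
    show "subseq (replicate k b @ u) ?w"
      using that(2) by (auto simp: prefix_def intro: list_emb_append_mono)
  qed
  from walk_glue_first_crossing[OF assms(8)[folded y_def]]
  consider (direct) "walk G y M x"
    | (crossing) w1 M' x1 where "M = w1 @ M'" "walk G y w1 x1" "x1 \<in> {h1, h2}"
        "walk (glue G h1 h2) (opp (glue G h1 h2) x1) M' x"
    by blast
  then show ?thesis
  proof cases
    case direct
    then show ?thesis using prefix_bound by blast
  next
    case crossing
    show ?thesis
    proof (cases "x1 = x")
      case True
      then show ?thesis using prefix_bound crossing(1,2) by simp
    next
      case False
      then have "x1 = y" using crossing(3) y(1,2) assms(6) by auto
      then have "walk (glue G h1 h2) x M' x" using crossing(4) y(3) by simp
      then have turn: "(\<not> b) \<in> set M'"
        using glued_loop_turns[OF assms(1,2,6,6,7)] by blast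
      obtain A1 \<alpha> A2 B1 B2 where A: "w1 = A1 @ [\<alpha>] @ A2"
        and B: "replicate m b = B1 @ [\<alpha>] @ B2" and C: "walk G y (A1 @ [\<not> \<alpha>] @ B2) h'"
        using walk_backtrack_shortcut[OF trivalent yG assms(3) yh'] crossing(2) \<open>x1 = y\<close>
          assms(9)[folded y_def] by blast
      have "\<alpha> \<in> set (replicate m b)" unfolding B by simp
      then have \<alpha>: "\<alpha> = b" by simp
      have "subseq [\<not> b] ([b] @ A2 @ M' @ B1 @ [b])" using turn by (simp add: subseq_singleton_left)
      then have "subseq ([\<not> b] @ B2) (([b] @ A2 @ M' @ B1 @ [b]) @ B2)"
        by (rule list_emb_append_mono) simp
      then have sub: "subseq (replicate k b @ A1 @ [\<not> b] @ B2) ?w"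
        unfolding crossing(1) A B \<alpha> by (simp add: subseq_append')
      have "walk G y (A1 @ [\<not> b] @ B2) h'" using C \<alpha> by simp
      then show ?thesis
        using safe_block_then_walk_bound[OF safe assms(5) yG assms(3) yh' _ _ sub] by simp
    qed
  qed
qed

lemma glued_block_then_walk_bound:
  assumes "h \<in> half_edges G" "h \<notin> {h1, h2}" "h' \<in> half_edges G" "h' \<notin> {h1, h2}" "h \<noteq> h'"
    and "sqrt (\<tau>0 - 2) \<le> real k" "x \<in> {h1, h2}"
    and "walk G h (replicate k b) x" "walk (glue G h1 h2) (opp (glue G h1 h2) x) W h'"
    and "mixed (replicate k b @ W)"
  shows "\<tau>0 \<le> word_trace (replicate k b @ W)"
proof -
  define y where "y = opp (glue G h1 h2) x"
  have y: "y \<in> {h1, h2}" "y \<noteq> x" using opp_glue_swap[OF h1_neq_h2 assms(7)] by (auto simp: y_def)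
  have yG: "y \<in> half_edges G" and yh': "y \<noteq> h'" using y(1) assms(4) h1 h2 by auto
  have turn: "(\<not> b) \<in> set W" using assms(10) by (cases b) (auto simp: mixed_def)
  from walk_glue_last_crossing[OF assms(9)[folded y_def]]
  consider (direct) "walk G y W h'"
    | (crossing) M wn x' where "W = M @ wn" "walk (glue G h1 h2) y M x'" "x' \<in> {h1, h2}"
        "walk G (opp (glue G h1 h2) x') wn h'"
    by blast
  then show ?thesis
  proof cases
    case direct
    then show ?thesis
      using safe_block_then_walk_bound[OF safe assms(6) yG assms(3) yh' _ turn] by simp
  next
    case crossing
    define y' where "y' = opp (glue G h1 h2) x'"
    have y': "y' \<in> {h1, h2}" "opp (glue G h1 h2) y' = x'"
      using opp_glue_swap[OF h1_neq_h2 crossing(3)] by (auto simp: y'_def)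
    have y'G: "y' \<in> half_edges G" and y'h': "y' \<noteq> h'" using y'(1) assms(4) h1 h2 by auto
    have wn: "walk G y' wn h'" using crossing(4) by (simp add: y'_def)
    show ?thesis
    proof (cases "(\<not> b) \<in> set wn")
      case True
      have "subseq (replicate k b @ wn) (replicate k b @ W)"
        by (simp add: crossing(1) subseq_append' subseq_drop_many)
      then show ?thesis
        using safe_block_then_walk_bound[OF safe assms(6) y'G assms(3) y'h' wn True] by simp
    next
      case False
      then obtain m where m: "wn = replicate m b" using replicate_if_negation_not_mem by blast
      have "(\<not> b) \<in> set M" using turn crossing(1) False by auto
      show ?thesis
      proof (cases "y' = x")
        case True
        then show ?thesis
          using safe_backtrack_bound[OF trivalent safe assms(1,3,5,8) _ \<open>(\<not> b) \<in> set M\<close>]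
            wn m crossing(1)
          by simp
      next
        case False
        then have "y' = y" "x' = x" using y y' assms(7) h1_neq_h2 by (auto simp: y_def opp_glue)
        then show ?thesis
          using glued_loop_bound[OF assms(1-4,6,7,8)] crossing(1,2) wn m by (simp add: y_def)
      qed
    qed
  qed
qed

lemma glued_mixed_walk_bound:
  assumes "h \<in> half_edges (glue G h1 h2)" "h' \<in> half_edges (glue G h1 h2)" "h \<noteq> h'"
    and "walk (glue G h1 h2) h W h'" "mixed W"
  shows "\<tau>0 \<le> word_trace W"
proof -
  have hG: "h \<in> half_edges G" "h \<notin> {h1, h2}" and h'G: "h' \<in> half_edges G" "h' \<notin> {h1, h2}"
    using assms(1,2) half_edges_glue[OF h1_neq_h2] by auto
  from walk_glue_first_crossing[OF assms(4)]
  consider (direct) "walk G h W h'"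
    | (crossing) w0 W1 x where "W = w0 @ W1" "walk G h w0 x" "x \<in> {h1, h2}"
        "walk (glue G h1 h2) (opp (glue G h1 h2) x) W1 h'"
    by blast
  then show ?thesis
  proof cases
    case direct
    then show ?thesis using safe_mixed_walk_bound[OF safe hG(1) h'G(1) assms(3) _ assms(5)] by simp
  next
    case crossing
    have xG: "x \<in> half_edges G" and hx: "h \<noteq> x" using crossing(3) hG h1 h2 by auto
    show ?thesis
    proof (cases "mixed w0")
      case True
      then show ?thesis
        using safe_mixed_walk_bound[OF safe hG(1) xG hx crossing(2)] crossing(1)
        by (simp add: subseq_rev_drop_many)
    next
      case False
      obtain b w0' where "w0 = b # w0'" using crossing(2) by (cases w0) auto
      then have w0: "w0 = replicate (length w0) b" using False by (intro replicate_if_not_mixed) simp_all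
      then have "sqrt (\<tau>0 - 2) \<le> real (length w0)"
        using safe_replicate_walk_length[OF safe hG(1) xG hx] crossing(2) by metis
      then show ?thesis
        using glued_block_then_walk_bound[OF hG h'G assms(3) _ crossing(3) _ crossing(4)] crossing(1,2) w0
          assms(5) by metis
    qed
  qed
qed

lemma glued_replicate_walk_length:
  assumes "h \<in> half_edges (glue G h1 h2)" "h' \<in> half_edges (glue G h1 h2)" "h \<noteq> h'"
    and "walk (glue G h1 h2) h (replicate k c) h'"
  shows "sqrt (\<tau>0 - 2) \<le> real k"
proof -
  have hG: "h \<in> half_edges G" "h \<notin> {h1, h2}" and h'G: "h' \<in> half_edges G"
    using assms(1,2) half_edges_glue[OF h1_neq_h2] by auto
  from walk_glue_first_crossing[OF assms(4)]
  consider (direct) "walk G h (replicate k c) h'"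
    | (crossing) u v x where "replicate k c = u @ v" "walk G h u x" "x \<in> {h1, h2}"
    by blast
  then show ?thesis
  proof cases
    case direct
    then show ?thesis using safe_replicate_walk_length[OF safe hG(1) h'G assms(3)] by blast
  next
    case crossing
    have "u = replicate (length u) c" using arg_cong[OF crossing(1), of set]
      by (intro replicate_if_negation_not_mem) (auto split: if_splits)
    moreover have "x \<in> half_edges G" "h \<noteq> x" using crossing(3) hG h1 h2 by auto
    ultimately have "sqrt (\<tau>0 - 2) \<le> real (length u)"
      using safe_replicate_walk_length[OF safe hG(1)] crossing(2) by metis
    moreover have "length u \<le> k" using arg_cong[OF crossing(1), of length] by simp
    ultimately show ?thesis by linarith
  qed
qed

lemma safe_glue: "safe \<tau>0 (glue G h1 h2)"
  unfolding safe_def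
proof (intro conjI ballI allI impI)
  fix h h'
  assume h: "h \<in> half_edges (glue G h1 h2)" "h' \<in> half_edges (glue G h1 h2)" "h \<noteq> h'"
  show "ereal \<tau>0 \<le> trace_dist (glue G h1 h2) h h'"
    unfolding trace_dist_def
  proof (rule INF_greatest)
    fix w assume "w \<in> {w \<in> path_words (glue G h1 h2) h h'. 2 < word_trace w}"
    then have "walk (glue G h1 h2) h w h'" "mixed w"
      by (auto simp: path_words_def mixed_iff_word_trace_gt_2)
    then show "ereal \<tau>0 \<le> ereal (word_trace w)" using glued_mixed_walk_bound[OF h] by simp
  qed
next
  fix h h' k b
  assume "h \<in> half_edges (glue G h1 h2)" "h' \<in> half_edges (glue G h1 h2)"
    "h \<noteq> h' \<and> replicate k b \<in> path_words (glue G h1 h2) h h'"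
  then show "sqrt (\<tau>0 - 2) \<le> real k"
    using glued_replicate_walk_length by (auto simp: path_words_def)
qed

end

theorem lemma2p6:
  fixes \<tau>0 :: real and G :: "'d rgraph" and h1 h2 :: 'd
  assumes "\<tau>0 \<ge> 3"
    and "trivalent_ribbon_graph G"
    and "safe \<tau>0 G"
  shows "(h1 \<in> half_edges G \<and> h2 \<in> half_edges G \<and> h1 \<noteq> h2 \<and>
           ereal \<tau>0 \<le> trace_dist G h1 h2 \<longrightarrow> safe \<tau>0 (glue G h1 h2))
         \<and> (card (half_edges G) \<ge> 2 \<longrightarrow>
             (\<exists>a\<in>half_edges G. \<exists>b\<in>half_edges G. a \<noteq> b \<and> ereal \<tau>0 \<le> trace_dist G a b))"
proof (intro conjI impI)
  assume "h1 \<in> half_edges G \<and> h2 \<in> half_edges G \<and> h1 \<noteq> h2 \<and> ereal \<tau>0 \<le> trace_dist G h1 h2"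
  then show "safe \<tau>0 (glue G h1 h2)" using safe_glue[OF assms(2,3)] by blast
next
  assume card: "card (half_edges G) \<ge> 2"
  then have "finite (half_edges G)" using card.infinite by fastforce
  then obtain a b where "a \<in> half_edges G" "b \<in> half_edges G" "a \<noteq> b"
    using card card_le_Suc0_iff_eq[of "half_edges G"] by fastforce
  then show "\<exists>a\<in>half_edges G. \<exists>b\<in>half_edges G. a \<noteq> b \<and> ereal \<tau>0 \<le> trace_dist G a b"
    using safe_trace_dist[OF assms(3)] by blast
qed

end
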